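(* Let $V=\mathbb{C}^n$ and let $d>2$. Let $T\in S^d(V)\subset V^{\otimes d}$ be a symmetric tensor. (1) Suppose there exists $k\in\{1,\dots,d-1\}$ such that $\operatorname{rank}(T)\le \operatorname{f-rank}_{[1,\dots,k],[k+1,\dots,d]}(T)$. Then every minimal decomposition of $T$ is symmetric. (2) Let $D=\{a_i\}_i$ be a decomposition of $T$. Assume that for every subset $I\subset\{1,\dots,d\}$ with $|I|=d-2$ the set $D^{(I)}$ is linearly independent. Then $D$ is symmetric.
   Context: A decomposition of $T\in S^d(V)$ is a finite set $D=\{a_i\}_i$ of rank-one tensors $a_i=a_i^{(1)}\otimes\cdots\otimes a_i^{(d)}$ with $a_i^{(k)}\in V$, such that $T=\sum_i a_i$. It is minimal if the number of terms equals $\operatorname{rank}(T)$, the minimal number of rank-one tensors summing to $T$. A decomposition is symmetric if every $a_i$ lies in $S^d(V)$ (i.e. is a symmetric tensor). For $I\subset\{1,\dots,d\}$ with complement $I^C$, $\operatorname{f-rank}_{I,I^C}(T)$ denotes the rank of $T$ viewed as a matrix (element of $(\bigotimes_{j\in I}V)\otimes(\bigotimes_{j\in I^C}V)$) obtained by grouping the indices in $I$ and in $I^C$. For a decomposition $D$, $D^{(I)}=\{\bigotimes_{j\in I}a_i^{(j)}\}_i$. *)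

theory Defs
  imports "HOL-Analysis.Analysis" "HOL-Library.Multiset"
begin

text \<open>V = complex^'n (so n = CARD('n)).  An order-d tensor in the d-fold tensor power of V
is represented by its coordinate function on index lists of length d; it vanishes on lists
of any other length.\<close>

type_synonym 'n tensor = "'n list \<Rightarrow> complex"

definition is_tensor :: "nat \<Rightarrow> 'n tensor \<Rightarrow> bool" where
  "is_tensor d T \<longleftrightarrow> (\<forall>xs. length xs \<noteq> d \<longrightarrow> T xs = 0)"

definition symmetric_tensor :: "nat \<Rightarrow> 'n tensor \<Rightarrow> bool" where
  "symmetric_tensor d T \<longleftrightarrow> is_tensor d T \<and>
     (\<forall>xs ys. length xs = d \<longrightarrow> mset xs = mset ys \<longrightarrow> T xs = T ys)"

text \<open>The rank-one tensor a^(0) \<otimes> ... \<otimes> a^(d-1) (factors indexed 0..d-1).\<close>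
definition outer :: "nat \<Rightarrow> (nat \<Rightarrow> complex^'n) \<Rightarrow> 'n tensor" where
  "outer d a = (\<lambda>xs. if length xs = d then (\<Prod>k<d. a k $ (xs ! k)) else 0)"

definition is_decomposition :: "nat \<Rightarrow> 'n::finite tensor \<Rightarrow> nat \<Rightarrow> (nat \<Rightarrow> nat \<Rightarrow> complex^'n) \<Rightarrow> bool" where
  "is_decomposition d T r a \<longleftrightarrow> T = (\<lambda>xs. \<Sum>i<r. outer d (a i) xs)"

definition tensor_rank :: "nat \<Rightarrow> 'n::finite tensor \<Rightarrow> nat" where
  "tensor_rank d T = (LEAST r. \<exists>a. is_decomposition d T r a)"

definition minimal_decomposition :: "nat \<Rightarrow> 'n::finite tensor \<Rightarrow> nat \<Rightarrow> (nat \<Rightarrow> nat \<Rightarrow> complex^'n) \<Rightarrow> bool" where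
  "minimal_decomposition d T r a \<longleftrightarrow> is_decomposition d T r a \<and> r = tensor_rank d T"

definition symmetric_decomposition :: "nat \<Rightarrow> nat \<Rightarrow> (nat \<Rightarrow> nat \<Rightarrow> complex^'n) \<Rightarrow> bool" where
  "symmetric_decomposition d r a \<longleftrightarrow> (\<forall>i<r. symmetric_tensor d (outer d (a i)))"

definition matrix_rank :: "'x set \<Rightarrow> 'y set \<Rightarrow> ('x \<Rightarrow> 'y \<Rightarrow> complex) \<Rightarrow> nat" where
  "matrix_rank X Y M = (LEAST r. \<exists>u v. \<forall>x\<in>X. \<forall>y\<in>Y.
       M x y = (\<Sum>i<r. u i x * v i y))"

definition flattening_rank :: "nat \<Rightarrow> nat \<Rightarrow> 'n::finite tensor \<Rightarrow> nat" where
  "flattening_rank d k T = matrix_rank {xs. length xs = k} {ys. length ys = d - k}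
      (\<lambda>xs ys. T (xs @ ys))"

text \<open>The element \<Otimes>_{j\<in>I} a^(j) of \<Otimes>_{j\<in>I} V, as a function of the indices (g j)_{j\<in>I}.\<close>
definition partial_outer :: "nat set \<Rightarrow> (nat \<Rightarrow> complex^'n) \<Rightarrow> (nat \<Rightarrow> 'n) \<Rightarrow> complex" where
  "partial_outer I a = (\<lambda>g. \<Prod>j\<in>I. a j $ g j)"

definition lin_indep_family :: "nat \<Rightarrow> (nat \<Rightarrow> 'x \<Rightarrow> complex) \<Rightarrow> bool" where
  "lin_indep_family r f \<longleftrightarrow>
     (\<forall>c. (\<forall>x. (\<Sum>i<r. c i * f i x) = 0) \<longrightarrow> (\<forall>i<r. c i = 0))"

end

theory Submission
  imports Defs "HOL-Combinatorics.Permutations"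
begin

text \<open>A rank-one tensor is symmetric as soon as its factors are pairwise proportional. Let
  T = \<Sum>_i a_i(0) \<otimes> ... \<otimes> a_i(d-1) be symmetric and p \<noteq> q. Exchanging positions p and q
  leaves T unchanged, so for a set S of other positions the difference is a combination of
  the tensors of D(S) whose coefficients are the 2 \<times> 2 minors of (a_i(p), a_i(q)), weighted by
  values of the remaining factors. If D(S) is independent and those factors are nonzero, all
  minors vanish. In (2) take S to be all positions but p and q. In (1), writing the
  k-flattening of T as a sum of rank T products shows that both sides of any split of a
  minimal decomposition into k and d - k positions are independent (every split is available
  because T is symmetric); this rules out zero factors, and since min k (d - k) \<le> d - 2 a
  suitable S fits beside p and q.\<close>

lemma prod_lessThan_nth_eq_prod_mset:
  fixes f :: "'a \<Rightarrow> 'b::comm_monoid_mult"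
  shows "(\<Prod>k<length xs. f (xs ! k)) = prod_mset (image_mset f (mset xs))"
proof -
  have "mset xs = image_mset (nth xs) (mset_set {0..<length xs})"
    by (metis map_nth mset_map mset_upt)
  then show ?thesis
    by (simp add: image_mset.compositionality prod_unfold_prod_mset o_def lessThan_atLeast0)
qed

lemma permutes_onto_initial_segment:
  assumes "S \<subseteq> {..<d}" and "card S = k"
  obtains \<sigma> where "\<sigma> permutes {..<d}" and "\<sigma> ` S = {..<k}"
proof -
  have fin: "finite S" using assms(1) finite_subset by blast
  have kd: "k \<le> d" using card_mono[OF _ assms(1)] assms(2) by simp
  obtain h1 where h1: "bij_betw h1 S {..<k}"
    using finite_same_card_bij[OF fin] assms(2) by force
  obtain h2 where h2: "bij_betw h2 ({..<d} - S) ({..<d} - {..<k})"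
    using finite_same_card_bij[of "{..<d} - S" "{..<d} - {..<k}"] assms kd fin
    by (auto simp: card_Diff_subset)
  define \<sigma> where "\<sigma> m = (if m \<in> S then h1 m else if m < d then h2 m else m)" for m
  have "bij_betw \<sigma> S {..<k}"
    using h1 by (rule bij_betw_cong[THEN iffD1, rotated]) (simp add: \<sigma>_def)
  moreover have "bij_betw \<sigma> ({..<d} - S) ({..<d} - {..<k})"
    using h2 by (rule bij_betw_cong[THEN iffD1, rotated]) (simp add: \<sigma>_def)
  ultimately have "bij_betw \<sigma> (S \<union> ({..<d} - S)) ({..<k} \<union> ({..<d} - {..<k}))"
    by (rule bij_betw_combine) auto
  moreover have "S \<union> ({..<d} - S) = {..<d}" "{..<k} \<union> ({..<d} - {..<k}) = {..<d}"
    using assms(1) kd by auto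
  ultimately have "\<sigma> permutes {..<d}"
    by (intro bij_imp_permutes) (use assms(1) in \<open>auto simp: \<sigma>_def\<close>)
  moreover have "\<sigma> ` S = {..<k}"
    using h1 by (simp add: bij_betw_def \<sigma>_def)
  ultimately show thesis by (rule that)
qed

lemma prod_lessThan_split_pair:
  fixes d :: nat and f :: "nat \<Rightarrow> 'a::comm_monoid_mult"
  assumes "p < d" "q < d" "p \<noteq> q" and S: "S \<subseteq> {..<d} - {p, q}"
  shows "(\<Prod>m<d. f m) = f p * f q * (\<Prod>m\<in>{..<d} - {p, q} - S. f m) * (\<Prod>m\<in>S. f m)"
proof -
  define R where "R = {..<d} - {p, q} - S"
  have "{..<d} = insert p (insert q (R \<union> S))" "p \<notin> insert q (R \<union> S)" "q \<notin> R \<union> S"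
    "R \<inter> S = {}"
    using assms by (auto simp: R_def)
  moreover have "finite R" "finite S"
    using S by (auto simp: R_def intro: finite_subset)
  ultimately have "(\<Prod>m<d. f m) = f p * f q * (\<Prod>m\<in>R. f m) * (\<Prod>m\<in>S. f m)"
    by (simp add: prod.union_disjoint mult.assoc)
  then show ?thesis by (simp add: R_def)
qed

lemma symmetric_tensor_permute_list:
  assumes "symmetric_tensor d T" and "\<sigma> permutes {..<d}" and "length w = d"
  shows "T (permute_list \<sigma> w) = T w"
proof -
  have "mset (permute_list \<sigma> w) = mset w"
    using assms(2,3) by (intro mset_permute_list) simp
  then show ?thesis
    using assms(1,3) unfolding symmetric_tensor_def by metis
qed

lemma outer_map_upt: "outer d b (map g [0..<d]) = (\<Prod>m<d. b m $ g m)"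
  by (simp add: outer_def)

definition proportional :: "complex^'n \<Rightarrow> complex^'n \<Rightarrow> bool" where
  "proportional u v \<longleftrightarrow> (\<forall>x y. u $ x * v $ y = u $ y * v $ x)"

lemma proportional_refl: "proportional u u"
  by (simp add: proportional_def mult.commute)

lemma symmetric_tensor_outer_if_proportional:
  fixes b :: "nat \<Rightarrow> complex^'n"
  assumes "d > 0" and factors: "\<forall>p<d. \<forall>q<d. proportional (b p) (b q)"
  shows "symmetric_tensor d (outer d b)"
  unfolding symmetric_tensor_def is_tensor_def
proof (intro conjI allI impI)
  fix xs :: "'n list"
  assume "length xs \<noteq> d"
  then show "outer d b xs = 0" by (simp add: outer_def)
next
  fix xs ys :: "'n list"
  assume lx: "length xs = d" and ms: "mset xs = mset ys"
  have ly: "length ys = d" using lx ms by (metis size_mset)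
  show "outer d b xs = outer d b ys"
  proof (cases "\<exists>j<d. b j = 0")
    case True
    then obtain j where "j < d" "b j = 0" by auto
    then have "outer d b zs = 0" if "length zs = d" for zs :: "'n list"
      using that unfolding outer_def by (simp add: prod_zero_iff) (metis lessThan_iff zero_index)
    then show ?thesis using lx ly by simp
  next
    case False
    then obtain x0 where x0: "b 0 $ x0 \<noteq> 0"
      using assms(1) by (metis vec_eq_iff zero_index)
    define c where "c k = b k $ x0 / b 0 $ x0" for k
    have factor: "b k $ z = c k * b 0 $ z" if "k < d" for k z
    proof -
      have "b k $ z * b 0 $ x0 = b k $ x0 * b 0 $ z"
        using factors that assms(1) unfolding proportional_def by blast
      then show ?thesis using x0 by (simp add: c_def field_simps)
    qed
    have "outer d b zs = (\<Prod>k<d. c k) * prod_mset (image_mset (\<lambda>z. b 0 $ z) (mset zs))"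
      if "length zs = d" for zs :: "'n list"
    proof -
      have "outer d b zs = (\<Prod>k<d. c k * b 0 $ (zs ! k))"
        using that unfolding outer_def by simp (intro prod.cong refl factor; simp)
      also have "\<dots> = (\<Prod>k<d. c k) * (\<Prod>k<length zs. b 0 $ (zs ! k))"
        using that by (simp add: prod.distrib)
      also have "(\<Prod>k<length zs. b 0 $ (zs ! k)) = prod_mset (image_mset (\<lambda>z. b 0 $ z) (mset zs))"
        by (rule prod_lessThan_nth_eq_prod_mset)
      finally show ?thesis .
    qed
    then show ?thesis using lx ly ms by simp
  qed
qed

lemma partial_outer_eq_0:
  assumes "finite J" "j \<in> J" "b j = 0"
  shows "partial_outer J b g = 0"
  using assms unfolding partial_outer_def by (metis prod_zero_iff zero_index)

lemma lin_indep_familyD: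
  assumes "lin_indep_family r f" and "\<And>x. (\<Sum>i<r. c i * f i x) = 0" and "i < r"
  shows "c i = 0"
  using assms unfolding lin_indep_family_def by blast

lemma lin_indep_family_partial_outer_nonzero:
  assumes indep: "lin_indep_family r (\<lambda>i. partial_outer J (a i))"
    and "finite J" "j \<in> J" "i < r"
  shows "a i j \<noteq> 0"
proof
  assume "a i j = 0"
  then have "of_bool (i = i) = (0::complex)"
    using assms(2-4)
    by (intro lin_indep_familyD[OF indep _ \<open>i < r\<close>, of "\<lambda>i'. of_bool (i' = i)"])
      (simp add: partial_outer_eq_0)
  then show False by simp
qed

lemma ex_prod_nonzero:
  fixes b :: "nat \<Rightarrow> complex^'n"
  assumes "finite R" and "\<forall>m\<in>R. b m \<noteq> 0"
  shows "\<exists>g. (\<Prod>m\<in>R. b m $ g m) \<noteq> 0"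
proof -
  define g where "g m = (SOME j. b m $ j \<noteq> 0)" for m
  have "b m $ g m \<noteq> 0" if "m \<in> R" for m
  proof -
    have "b m \<noteq> 0" using assms(2) that by blast
    then have "\<exists>j. b m $ j \<noteq> 0" by (metis vec_eq_iff zero_index)
    then show ?thesis unfolding g_def by (rule someI_ex)
  qed
  then have "(\<Prod>m\<in>R. b m $ g m) \<noteq> 0" using assms(1) by simp
  then show ?thesis by blast
qed

section \<open>Flattenings\<close>

lemma matrix_rank_transpose: "matrix_rank Y X (\<lambda>y x. M x y) = matrix_rank X Y M"
proof -
  have "(\<exists>u v. \<forall>y\<in>Y. \<forall>x\<in>X. M x y = (\<Sum>i<r. u i y * v i x))
      \<longleftrightarrow> (\<exists>u v. \<forall>x\<in>X. \<forall>y\<in>Y. M x y = (\<Sum>i<r. u i x * v i y))" for r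
  proof
    assume "\<exists>u v. \<forall>y\<in>Y. \<forall>x\<in>X. M x y = (\<Sum>i<r. u i y * v i x)"
    then obtain u v where "\<forall>y\<in>Y. \<forall>x\<in>X. M x y = (\<Sum>i<r. u i y * v i x)" by blast
    then have "\<forall>x\<in>X. \<forall>y\<in>Y. M x y = (\<Sum>i<r. v i x * u i y)" by (simp add: mult.commute)
    then show "\<exists>u v. \<forall>x\<in>X. \<forall>y\<in>Y. M x y = (\<Sum>i<r. u i x * v i y)" by blast
  next
    assume "\<exists>u v. \<forall>x\<in>X. \<forall>y\<in>Y. M x y = (\<Sum>i<r. u i x * v i y)"
    then obtain u v where "\<forall>x\<in>X. \<forall>y\<in>Y. M x y = (\<Sum>i<r. u i x * v i y)" by blast
    then have "\<forall>y\<in>Y. \<forall>x\<in>X. M x y = (\<Sum>i<r. v i y * u i x)" by (simp add: mult.commute)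
    then show "\<exists>u v. \<forall>y\<in>Y. \<forall>x\<in>X. M x y = (\<Sum>i<r. u i y * v i x)" by blast
  qed
  then show ?thesis unfolding matrix_rank_def by (intro arg_cong[where f = Least] ext)
qed

text \<open>If some \<open>c j \<noteq> 0\<close>, then \<open>U j\<close> is a combination of the other \<open>U i\<close> on \<open>X\<close>, and absorbing
  it into the remaining terms writes \<open>M\<close> as a sum of \<open>r - 1\<close> products.\<close>

lemma matrix_rank_le_imp_indep:
  fixes U :: "nat \<Rightarrow> 'x \<Rightarrow> complex" and W :: "nat \<Rightarrow> 'y \<Rightarrow> complex"
  assumes rep: "\<forall>x\<in>X. \<forall>y\<in>Y. M x y = (\<Sum>i<r. U i x * W i y)"
    and rank: "r \<le> matrix_rank X Y M"
    and c: "\<forall>x\<in>X. (\<Sum>i<r. c i * U i x) = 0"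
  shows "\<forall>i<r. c i = 0"
proof (rule ccontr)
  assume "\<not> ?thesis"
  then obtain j where j: "j < r" "c j \<noteq> 0" by auto
  define skip where "skip i = (if i < j then i else Suc i)" for i
  define u where "u i = U (skip i)" for i
  define v where "v i y = W (skip i) y - c (skip i) / c j * W j y" for i y
  let ?A = "{..<r} - {j}"
  have bij: "bij_betw skip {..<r-1} ?A"
    by (rule bij_betw_byWitness[where f'="\<lambda>i. if i < j then i else i - 1"])
      (use j in \<open>auto simp: skip_def\<close>)
  have "M x y = (\<Sum>i<r-1. u i x * v i y)" if x: "x \<in> X" and y: "y \<in> Y" for x y
  proof -
    have "0 = c j * U j x + (\<Sum>i\<in>?A. c i * U i x)"
      using c x j by (simp add: sum.remove)
    then have Uj: "U j x = - (\<Sum>i\<in>?A. c i * U i x) / c j"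
      using j by (simp add: field_simps add_eq_0_iff)
    have "M x y = U j x * W j y + (\<Sum>i\<in>?A. U i x * W i y)"
      using rep x y j by (simp add: sum.remove)
    also have "\<dots> = (\<Sum>i\<in>?A. U i x * (W i y - c i / c j * W j y))"
      by (simp add: Uj right_diff_distrib sum_subtractf sum_divide_distrib sum_distrib_left
          sum_distrib_right mult_ac)
    also have "\<dots> = (\<Sum>i<r-1. u i x * v i y)"
      using sum.reindex_bij_betw[OF bij, of "\<lambda>i. U i x * (W i y - c i / c j * W j y)"]
      by (simp add: u_def v_def)
    finally show ?thesis .
  qed
  then have "matrix_rank X Y M \<le> r - 1"
    unfolding matrix_rank_def by (intro Least_le) blast
  with rank j show False by linarith
qed

text \<open>By symmetry of \<open>T\<close>, the positions in \<open>S\<close> can be fed from \<open>xs\<close> and the others from \<open>ys\<close>.\<close>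

lemma flattening_factorization:
  fixes a :: "nat \<Rightarrow> nat \<Rightarrow> complex^'n::finite" and T :: "'n tensor"
  assumes sym: "symmetric_tensor d T" and dec: "is_decomposition d T r a"
    and S: "S \<subseteq> {..<d}" "card S = k"
  obtains gx gy :: "'n list \<Rightarrow> nat \<Rightarrow> 'n" where
    "\<And>xs ys. length xs = k \<Longrightarrow> length ys = d - k \<Longrightarrow>
      T (xs @ ys) = (\<Sum>i<r. partial_outer S (a i) (gx xs) * partial_outer ({..<d} - S) (a i) (gy ys))"
proof -
  obtain \<sigma> where \<sigma>: "\<sigma> permutes {..<d}" "\<sigma> ` S = {..<k}"
    using permutes_onto_initial_segment[OF S] by blast
  have kd: "k \<le> d" using card_mono[OF _ S(1)] S(2) by simp
  have \<sigma>_compl: "k \<le> \<sigma> m" if "m \<in> {..<d} - S" for m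
  proof -
    have "\<sigma> m \<notin> \<sigma> ` S"
      using that inj_image_mem_iff[OF permutes_inj[OF \<sigma>(1)]] by blast
    then show ?thesis using \<sigma>(2) by auto
  qed
  define gx where "gx xs m = xs ! \<sigma> m" for xs :: "'n list" and m
  define gy where "gy ys m = ys ! (\<sigma> m - k)" for ys :: "'n list" and m
  show thesis
  proof (rule that)
    fix xs ys :: "'n list"
    assume lx: "length xs = k" and ly: "length ys = d - k"
    let ?w = "xs @ ys"
    have lw: "length ?w = d" using lx ly kd by simp
    have "T ?w = T (map (\<lambda>m. ?w ! \<sigma> m) [0..<d])"
      using symmetric_tensor_permute_list[OF sym \<sigma>(1) lw] lw by (simp add: permute_list_def)
    also have "\<dots> = (\<Sum>i<r. \<Prod>m<d. a i m $ (?w ! \<sigma> m))"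
      using dec by (simp add: is_decomposition_def outer_map_upt)
    also have "\<dots> = (\<Sum>i<r. partial_outer S (a i) (gx xs) * partial_outer ({..<d} - S) (a i) (gy ys))"
    proof (rule sum.cong[OF refl])
      fix i
      have "(\<Prod>m\<in>S. a i m $ (?w ! \<sigma> m)) = partial_outer S (a i) (gx xs)"
        unfolding partial_outer_def gx_def
        by (rule prod.cong) (use \<sigma>(2) lx in \<open>auto simp: nth_append\<close>)
      moreover have "(\<Prod>m\<in>{..<d} - S. a i m $ (?w ! \<sigma> m)) = partial_outer ({..<d} - S) (a i) (gy ys)"
        unfolding partial_outer_def gy_def
        by (rule prod.cong[OF refl]) (use \<sigma>_compl[THEN leD] lx in \<open>simp add: nth_append\<close>)
      ultimately show "(\<Prod>m<d. a i m $ (?w ! \<sigma> m))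
          = partial_outer S (a i) (gx xs) * partial_outer ({..<d} - S) (a i) (gy ys)"
        using S(1) by (simp add: prod.subset_diff mult.commute)
    qed
    finally show "T ?w = (\<Sum>i<r. partial_outer S (a i) (gx xs) * partial_outer ({..<d} - S) (a i) (gy ys))" .
  qed
qed

lemma flattening_rank_bound_imp_indep:
  fixes a :: "nat \<Rightarrow> nat \<Rightarrow> complex^'n::finite" and T :: "'n tensor"
  assumes sym: "symmetric_tensor d T" and dec: "is_decomposition d T r a"
    and rank: "r \<le> flattening_rank d k T" and "k \<le> d"
    and J: "J \<subseteq> {..<d}" "card J = k \<or> card J = d - k"
  shows "lin_indep_family r (\<lambda>i. partial_outer J (a i))"
proof -
  have indep: "lin_indep_family r (\<lambda>i. partial_outer S (a i))
      \<and> lin_indep_family r (\<lambda>i. partial_outer ({..<d} - S) (a i))"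
    if S: "S \<subseteq> {..<d}" "card S = k" for S
  proof -
    obtain gx gy :: "'n list \<Rightarrow> nat \<Rightarrow> 'n" where rep:
      "\<And>xs ys. length xs = k \<Longrightarrow> length ys = d - k \<Longrightarrow>
        T (xs @ ys) = (\<Sum>i<r. partial_outer S (a i) (gx xs) * partial_outer ({..<d} - S) (a i) (gy ys))"
      using flattening_factorization[OF sym dec S] by blast
    define X where "X = {xs :: 'n list. length xs = k}"
    define Y where "Y = {ys :: 'n list. length ys = d - k}"
    have rank_XY: "r \<le> matrix_rank X Y (\<lambda>xs ys. T (xs @ ys))"
      using rank by (simp add: flattening_rank_def X_def Y_def)
    then have rank_YX: "r \<le> matrix_rank Y X (\<lambda>ys xs. T (xs @ ys))"
      using matrix_rank_transpose[of Y X "\<lambda>xs ys. T (xs @ ys)"] by simp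
    show ?thesis
      unfolding lin_indep_family_def
    proof (rule conjI; rule allI; rule impI)
      fix c :: "nat \<Rightarrow> complex"
      assume "\<forall>g. (\<Sum>i<r. c i * partial_outer S (a i) g) = 0"
      then show "\<forall>i<r. c i = 0"
        using matrix_rank_le_imp_indep[OF _ rank_XY, where U = "\<lambda>i xs. partial_outer S (a i) (gx xs)"
            and W = "\<lambda>i ys. partial_outer ({..<d} - S) (a i) (gy ys)"]
        by (simp add: X_def Y_def rep)
    next
      fix c :: "nat \<Rightarrow> complex"
      assume "\<forall>g. (\<Sum>i<r. c i * partial_outer ({..<d} - S) (a i) g) = 0"
      then show "\<forall>i<r. c i = 0"
        using matrix_rank_le_imp_indep[OF _ rank_YX, where W = "\<lambda>i xs. partial_outer S (a i) (gx xs)"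
            and U = "\<lambda>i ys. partial_outer ({..<d} - S) (a i) (gy ys)"]
        by (simp add: X_def Y_def rep mult.commute)
    qed
  qed
  from J(2) show ?thesis
  proof
    assume "card J = k"
    then show ?thesis using indep J(1) by blast
  next
    assume "card J = d - k"
    moreover have "card ({..<d} - J) = d - card J"
      using J(1) finite_subset[OF J(1)] by (simp add: card_Diff_subset)
    ultimately have "card ({..<d} - J) = k" and "{..<d} - ({..<d} - J) = J"
      using J(1) \<open>k \<le> d\<close> by auto
    then show ?thesis using indep[of "{..<d} - J"] by auto
  qed
qed

section \<open>Symmetry of the factors\<close>

text \<open>Exchanging positions \<open>p\<close> and \<open>q\<close> fixes \<open>T\<close>; evaluate this on tuples that agree with \<open>g\<close>
  on \<open>S\<close> and with \<open>g0\<close> off \<open>S \<union> {p, q}\<close>.\<close>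

lemma decomposition_swap_relation:
  fixes a :: "nat \<Rightarrow> nat \<Rightarrow> complex^'n::finite" and T :: "'n tensor"
  assumes sym: "symmetric_tensor d T" and dec: "is_decomposition d T r a"
    and pq: "p < d" "q < d" "p \<noteq> q" and S: "S \<subseteq> {..<d} - {p, q}"
  shows "(\<Sum>i<r. ((a i p $ x * a i q $ y - a i p $ y * a i q $ x)
            * (\<Prod>m\<in>{..<d} - {p, q} - S. a i m $ g0 m)) * partial_outer S (a i) g) = 0"
proof -
  define R where "R = {..<d} - {p, q} - S"
  define G where
    "G u v m = (if m = p then u else if m = q then v else if m \<in> S then g m else g0 m)" for u v m
  have outer_G: "outer d (a i) (map (G u v) [0..<d])
      = a i p $ u * a i q $ v * (\<Prod>m\<in>R. a i m $ g0 m) * partial_outer S (a i) g" for i u v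
  proof -
    have "(\<Prod>m\<in>R. a i m $ G u v m) = (\<Prod>m\<in>R. a i m $ g0 m)"
      by (rule prod.cong) (auto simp: R_def G_def)
    moreover have "(\<Prod>m\<in>S. a i m $ G u v m) = partial_outer S (a i) g"
      unfolding partial_outer_def by (rule prod.cong) (use S in \<open>auto simp: G_def\<close>)
    ultimately show ?thesis
      using pq unfolding outer_map_upt prod_lessThan_split_pair[OF pq S, folded R_def]
      by (simp add: G_def)
  qed
  have perm: "Transposition.transpose p q permutes {..<d}"
    using pq by (simp add: permutes_swap_id)
  have "permute_list (Transposition.transpose p q) (map (G x y) [0..<d]) = map (G y x) [0..<d]"
    using pq by (intro nth_equalityI) (auto simp: permute_list_nth permutes_swap_id G_def transpose_def)
  then have T_swap: "T (map (G y x) [0..<d]) = T (map (G x y) [0..<d])"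
    using symmetric_tensor_permute_list[OF sym perm, of "map (G x y) [0..<d]"] by simp
  have "(\<Sum>i<r. ((a i p $ x * a i q $ y - a i p $ y * a i q $ x)
            * (\<Prod>m\<in>R. a i m $ g0 m)) * partial_outer S (a i) g)
      = (\<Sum>i<r. outer d (a i) (map (G x y) [0..<d]) - outer d (a i) (map (G y x) [0..<d]))"
    unfolding outer_G by (simp add: left_diff_distrib)
  also have "\<dots> = T (map (G x y) [0..<d]) - T (map (G y x) [0..<d])"
    using dec by (simp add: is_decomposition_def sum_subtractf)
  finally show ?thesis using T_swap by (simp add: R_def)
qed

lemma decomposition_factors_proportional:
  fixes a :: "nat \<Rightarrow> nat \<Rightarrow> complex^'n::finite" and T :: "'n tensor"
  assumes sym: "symmetric_tensor d T" and dec: "is_decomposition d T r a"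
    and pq: "p < d" "q < d" "p \<noteq> q" and S: "S \<subseteq> {..<d} - {p, q}"
    and indep: "lin_indep_family r (\<lambda>i. partial_outer S (a i))"
    and nonzero: "\<forall>i<r. \<forall>m\<in>{..<d} - {p, q} - S. a i m \<noteq> 0"
    and "i < r"
  shows "proportional (a i p) (a i q)"
proof -
  define R where "R = {..<d} - {p, q} - S"
  obtain g0 where g0: "(\<Prod>m\<in>R. a i m $ g0 m) \<noteq> 0"
    using ex_prod_nonzero[of R "a i"] nonzero \<open>i < r\<close> by (auto simp: R_def)
  have "(a i p $ x * a i q $ y - a i p $ y * a i q $ x) * (\<Prod>m\<in>R. a i m $ g0 m) = 0" for x y
    using decomposition_swap_relation[OF sym dec pq S, of x y g0, folded R_def]
    by (rule lin_indep_familyD[OF indep _ \<open>i < r\<close>])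
  then show ?thesis
    using g0 unfolding proportional_def by simp
qed

lemma symmetric_decomposition_if_indep:
  fixes a :: "nat \<Rightarrow> nat \<Rightarrow> complex^'n::finite" and T :: "'n tensor"
  assumes "0 < d" and sym: "symmetric_tensor d T" and dec: "is_decomposition d T r a"
    and indep: "\<forall>I. I \<subseteq> {0..<d} \<and> card I = d - 2 \<longrightarrow> lin_indep_family r (\<lambda>i. partial_outer I (a i))"
  shows "symmetric_decomposition d r a"
  unfolding symmetric_decomposition_def
proof (intro allI impI symmetric_tensor_outer_if_proportional[OF \<open>0 < d\<close>])
  fix i p q
  assume "i < r" "p < d" "q < d"
  show "proportional (a i p) (a i q)"
  proof (cases "p = q")
    case True
    then show ?thesis by (simp add: proportional_refl)
  next
    case False
    have "card ({..<d} - {p, q}) = d - 2"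
      using \<open>p < d\<close> \<open>q < d\<close> False by (simp add: card_Diff_subset)
    then have "lin_indep_family r (\<lambda>i. partial_outer ({..<d} - {p, q}) (a i))"
      using indep by (auto simp: atLeast0LessThan)
    then show ?thesis
      using decomposition_factors_proportional[OF sym dec \<open>p < d\<close> \<open>q < d\<close> False subset_refl]
        \<open>i < r\<close> by simp
  qed
qed

lemma minimal_decomposition_symmetric:
  fixes a :: "nat \<Rightarrow> nat \<Rightarrow> complex^'n::finite" and T :: "'n tensor"
  assumes "2 < d" and sym: "symmetric_tensor d T" and k: "k \<in> {1..d-1}"
    and rank: "tensor_rank d T \<le> flattening_rank d k T"
    and min: "minimal_decomposition d T r a"
  shows "symmetric_decomposition d r a"
proof -
  have dec: "is_decomposition d T r a" and r_le: "r \<le> flattening_rank d k T"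
    using min rank by (auto simp: minimal_decomposition_def)
  have indep: "lin_indep_family r (\<lambda>i. partial_outer J (a i))"
    if "J \<subseteq> {..<d}" "card J = k \<or> card J = d - k" for J
    using k by (intro flattening_rank_bound_imp_indep[OF sym dec r_le _ that]) auto
  have nonzero: "a i m \<noteq> 0" if "i < r" "m < d" for i m
  proof -
    define J where "J = (if m < k then {..<k} else {..<d} - {..<k})"
    have "J \<subseteq> {..<d}" "card J = k \<or> card J = d - k" "m \<in> J"
      using that k by (auto simp: J_def)
    then show ?thesis
      using lin_indep_family_partial_outer_nonzero[OF indep _ _ \<open>i < r\<close>] finite_subset by blast
  qed
  show ?thesis
    unfolding symmetric_decomposition_def
  proof (intro allI impI symmetric_tensor_outer_if_proportional)
    fix i p q
    assume "i < r" "p < d" "q < d"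
    show "proportional (a i p) (a i q)"
    proof (cases "p = q")
      case True
      then show ?thesis by (simp add: proportional_refl)
    next
      case False
      have "card ({..<d} - {p, q}) = d - 2"
        using \<open>p < d\<close> \<open>q < d\<close> False by (simp add: card_Diff_subset)
      moreover have "min k (d - k) \<le> d - 2"
        using k \<open>2 < d\<close> by auto
      ultimately obtain J where J: "J \<subseteq> {..<d} - {p, q}" "card J = min k (d - k)"
        by (metis obtain_subset_with_card_n)
      then have "lin_indep_family r (\<lambda>i. partial_outer J (a i))"
        by (intro indep) (auto simp: min_def)
      then show ?thesis
        using decomposition_factors_proportional[OF sym dec \<open>p < d\<close> \<open>q < d\<close> False J(1)]
          nonzero \<open>i < r\<close> by blast
    qed
  qed (use \<open>2 < d\<close> in simp)
qed

theorem lemma1p1: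
  fixes d :: nat and T :: "'n::finite tensor"
  assumes "d > 2" and "symmetric_tensor d T"
  shows "((\<exists>k\<in>{1..d-1}. tensor_rank d T \<le> flattening_rank d k T) \<longrightarrow>
           (\<forall>r a. minimal_decomposition d T r a \<longrightarrow> symmetric_decomposition d r a))
       \<and> (\<forall>r a. is_decomposition d T r a \<longrightarrow>
           (\<forall>I. I \<subseteq> {0..<d} \<and> card I = d - 2 \<longrightarrow>
                 lin_indep_family r (\<lambda>i. partial_outer I (a i))) \<longrightarrow>
           symmetric_decomposition d r a)"
  using minimal_decomposition_symmetric[OF assms] symmetric_decomposition_if_indep[OF _ assms(2)] assms(1)
  by auto

end
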